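(* Consider a D2D caching network with $K$ users each of cache size $M$ files, of which $S$ are selfish, a library of $N$ files, and $\frac{M(K-S)}{N}>1$, using the random caching scheme described in the context. Then every request vector $(\mathsf{r}_1,\dots,\mathsf{r}_K)$ is recoverable by the users if all library files are encoded with an MDS code of rate $r$, where $r\in(0,1)$ is a real positive root of the polynomial $$\sum_{i=0}^{K-S-1}\binom{K-S}{i}\Big(-\frac{M}{N}\Big)^{K-S-i}r^{K-S-1-i}+1 .$$
   Context: Selfish users cache content like all other users but never transmit; all users receive all transmissions. Random caching scheme: each of the $N$ library files of $B$ bits is divided into $I$ subfiles of $B/I$ bits, each regarded as a symbol of $\mathbb{F}_{2^{B/I}}$, and each file is encoded with an $(I, I/r)$ MDS code over $\mathbb{F}_{2^{B/I}}$ (codeword length $I/r$; any $I$ encoded symbols recover the file). Each user independently, for each file, selects uniformly at random $MI/N$ of the $I/r$ encoded-symbol indices and caches those symbols, so a given encoded symbol is cached by a given user with probability $Mr/N$. At the end of the delivery phase each user knows every encoded symbol of its requested file that is cached by itself or by at least one non-selfish user; the number of encoded symbols of a file cached exclusively by a given set $\mathcal{P}$ of users is taken to be its typical value $(\frac{Mr}{N})^{|\mathcal{P}|}(1-\frac{Mr}{N})^{K-|\mathcal{P}|}\frac{I}{r}$ (law of large numbers, large $I$). A file is recoverable by a user if the user knows at least $I$ of its encoded symbols. *)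

theory Defs
  imports Complex_Main
begin

text \<open>Users are 0,...,K-1; Sel is the set of selfish users. Each encoded symbol of a
file is cached by a given user with probability p = M r / N. Typical-value model:
the number of encoded symbols of a file cached exclusively by the set P of users is
p^|P| (1-p)^(K-|P|) (I/r).\<close>

definition cache_prob :: "nat \<Rightarrow> nat \<Rightarrow> real \<Rightarrow> real" where
  "cache_prob M N r = real M * r / real N"

definition excl_count :: "nat \<Rightarrow> nat \<Rightarrow> nat \<Rightarrow> nat \<Rightarrow> real \<Rightarrow> nat set \<Rightarrow> real" where
  "excl_count K M N I r P =
     cache_prob M N r ^ card P * (1 - cache_prob M N r) ^ (K - card P) * (real I / r)"

text \<open>Number of encoded symbols of file f known by user u at the end of delivery:
those cached by u itself or by at least one non-selfish user (by symmetry of the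
caching scheme this does not depend on f).\<close>
definition known_symbols ::
  "nat \<Rightarrow> nat set \<Rightarrow> nat \<Rightarrow> nat \<Rightarrow> nat \<Rightarrow> real \<Rightarrow> nat \<Rightarrow> nat \<Rightarrow> real" where
  "known_symbols K Sel M N I r u f =
     (\<Sum>P\<in>{P. P \<subseteq> {..<K} \<and> (u \<in> P \<or> P \<inter> ({..<K} - Sel) \<noteq> {})}. excl_count K M N I r P)"

definition recoverable ::
  "nat \<Rightarrow> nat set \<Rightarrow> nat \<Rightarrow> nat \<Rightarrow> nat \<Rightarrow> real \<Rightarrow> (nat \<Rightarrow> nat) \<Rightarrow> bool" where
  "recoverable K Sel M N I r d = (\<forall>u<K. known_symbols K Sel M N I r u (d u) \<ge> real I)"

end

theory Submission
  imports Defs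
begin

text \<open>User u misses exactly the encoded symbols cached only by users in Sel - {u}, so
by the binomial theorem over sets of users it knows a fraction 1 - (1 - p)^m of the I/r
symbols, where p = M r / N and m = K - card (Sel - {u}) \<ge> K - S. Expanding (1 - p)^(K-S)
in powers of r shows that r is a root of the given polynomial exactly when
1 - (1 - p)^(K-S) = r; hence every user knows at least r (I/r) = I symbols.\<close>

lemma sum_Pow_power_card:
  fixes p q :: "'a :: comm_semiring_1"
  assumes "finite C"
  shows "(\<Sum>X\<in>Pow C. p ^ card X * q ^ (card C - card X)) = (p + q) ^ card C"
proof -
  have "(p + q) ^ card C = (\<Sum>X\<in>Pow C. (\<Prod>x\<in>X. p) * (\<Prod>x\<in>C - X. q))"
    using prod_add[OF assms, of "\<lambda>_. p" "\<lambda>_. q"] by simp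
  also have "\<dots> = (\<Sum>X\<in>Pow C. p ^ card X * q ^ (card C - card X))"
    by (rule sum.cong) (auto simp: card_Diff_subset finite_subset[OF _ assms])
  finally show ?thesis ..
qed

lemma sum_Pow_power_card_padded:
  fixes p q :: "'a :: comm_semiring_1"
  assumes "finite C" and "card C \<le> K"
  shows "(\<Sum>X\<in>Pow C. p ^ card X * q ^ (K - card X)) = (p + q) ^ card C * q ^ (K - card C)"
proof -
  have "(\<Sum>X\<in>Pow C. p ^ card X * q ^ (K - card X))
      = (\<Sum>X\<in>Pow C. p ^ card X * q ^ (card C - card X)) * q ^ (K - card C)"
    unfolding sum_distrib_right
  proof (rule sum.cong)
    fix X assume "X \<in> Pow C"
    then have "card X \<le> card C" using assms(1) by (simp add: card_mono)
    then have "K - card X = (card C - card X) + (K - card C)" using assms(2) by simp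
    then show "p ^ card X * q ^ (K - card X) = p ^ card X * q ^ (card C - card X) * q ^ (K - card C)"
      by (simp add: power_add mult.assoc)
  qed simp
  then show ?thesis using sum_Pow_power_card[OF assms(1), of p q] by simp
qed

lemma known_symbols_eq:
  assumes "Sel \<subseteq> {..<K}" and "u < K"
  shows "known_symbols K Sel M N I r u f
     = (1 - (1 - cache_prob M N r) ^ (K - card (Sel - {u}))) * (real I / r)"
proof -
  define p where "p = cache_prob M N r"
  define C where "C = Sel - {u}"
  let ?g = "\<lambda>X. p ^ card X * (1 - p) ^ (K - card X)"
  have C: "finite C" "C \<subseteq> {..<K}" "card C \<le> K"
    using assms(1) card_mono[of "{..<K}" C] unfolding C_def by (auto intro: finite_subset)
  have known_sets: "{P. P \<subseteq> {..<K} \<and> (u \<in> P \<or> P \<inter> ({..<K} - Sel) \<noteq> {})} = Pow {..<K} - Pow C"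
    using assms unfolding C_def by blast
  have "(\<Sum>X\<in>Pow {..<K} - Pow C. ?g X) = (\<Sum>X\<in>Pow {..<K}. ?g X) - (\<Sum>X\<in>Pow C. ?g X)"
    using C by (intro sum_diff) auto
  also have "\<dots> = 1 - (1 - p) ^ (K - card C)"
    using sum_Pow_power_card_padded[of "{..<K}" K p "1 - p"]
      sum_Pow_power_card_padded[OF C(1,3), of p "1 - p"]
    by simp
  finally show ?thesis
    unfolding known_symbols_def excl_count_def known_sets p_def[symmetric] C_def[symmetric]
    by (simp only: sum_distrib_right[symmetric])
qed

lemma one_minus_power_eq_root_poly:
  fixes c x :: "'a :: comm_ring_1"
  shows "(1 - c * x) ^ n
     = x * (\<Sum>i = 0..<n. of_nat (n choose i) * (- c) ^ (n - i) * x ^ (n - 1 - i)) + 1"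
proof -
  have "(1 - c * x) ^ n = (\<Sum>i\<le>n. of_nat (n choose i) * (- c * x) ^ (n - i))"
    using binomial_ring[of 1 "- c * x" n] by (simp add: mult.commute)
  also have "\<dots> = (\<Sum>i<n. of_nat (n choose i) * (- c * x) ^ (n - i)) + 1"
    by (simp add: lessThan_Suc_atMost[symmetric])
  also have "(\<Sum>i<n. of_nat (n choose i) * (- c * x) ^ (n - i))
      = x * (\<Sum>i = 0..<n. of_nat (n choose i) * (- c) ^ (n - i) * x ^ (n - 1 - i))"
    unfolding sum_distrib_left atLeast0LessThan
  proof (rule sum.cong)
    fix i assume "i \<in> {..<n}"
    then have "n - i = Suc (n - 1 - i)" by auto
    then show "of_nat (n choose i) * (- c * x) ^ (n - i)
        = x * (of_nat (n choose i) * (- c) ^ (n - i) * x ^ (n - 1 - i))"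
      by (simp only: power_Suc power_mult_distrib) (simp add: mult_ac)
  qed simp
  finally show ?thesis .
qed

theorem theorem3:
  fixes K S M N I :: nat and Sel :: "nat set" and r :: real
  assumes "Sel \<subseteq> {..<K}" and "card Sel = S"
    and "M \<le> N"
    and "real M * real (K - S) / real N > 1"
    and "0 < r" and "r < 1"
    and "(\<Sum>i = 0..<K - S. real ((K - S) choose i) * (- (real M / real N)) ^ (K - S - i)
            * r ^ (K - S - 1 - i)) + 1 = 0"
  shows "\<forall>d. (\<forall>u<K. d u < N) \<longrightarrow> recoverable K Sel M N I r d"
proof -
  define p where "p = cache_prob M N r"
  have "p = real M / real N * r" unfolding p_def cache_prob_def by simp
  moreover have "(\<Sum>i = 0..<K - S. real ((K - S) choose i) * (- (real M / real N)) ^ (K - S - i)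
      * r ^ (K - S - 1 - i)) = - 1"
    using assms(7) by linarith
  ultimately have root: "1 - (1 - p) ^ (K - S) = r"
    using one_minus_power_eq_root_poly[of "real M / real N" r "K - S"] by simp
  have "real M * r \<le> real N"
    using assms(3,5,6) mult_mono[of "real M" "real N" r 1] by simp
  then have p_unit: "0 \<le> p" "p \<le> 1"
    unfolding p_def cache_prob_def using assms(5) by (auto simp: divide_le_eq)
  have "real I \<le> known_symbols K Sel M N I r u f" if "u < K" for u f
  proof -
    have "card (Sel - {u}) \<le> S"
      using assms(1,2) by (metis Diff_subset card_mono finite_lessThan finite_subset)
    then have "(1 - p) ^ (K - card (Sel - {u})) \<le> (1 - p) ^ (K - S)"
      using p_unit by (intro power_decreasing) auto
    then have "r * (real I / r) \<le> (1 - (1 - p) ^ (K - card (Sel - {u}))) * (real I / r)"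
      using root assms(5) by (intro mult_right_mono) auto
    then show ?thesis
      using known_symbols_eq[OF assms(1) that] assms(5) unfolding p_def by simp
  qed
  then show ?thesis unfolding recoverable_def by blast
qed

end
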